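(* Let $A$ and $B$ be strings with self-referential LZ77 parses $Z_A$ and $Z_B$. Suppose Alice knows $A$, Bob knows $B$, and the length of the longest common prefix of $Z_A$ and $Z_B$ is known. Then the parties can determine $\ell=\mathrm{LCP}(A,B)$ using either (1) $O(1+\lg\lg\ell)$ rounds and $O(\lg\ell)$ communication, or (2) $O(1)$ rounds and $O(\lg\ell+\lg\lg\lg|A|)$ communication.
   Context: $\mathrm{LCP}(X,Y)$ is the length of the longest common prefix of $X$ and $Y$. The self-referential LZ77 parse of a string $S$ divides $S$ greedily from left to right into phrases. The $i$-th phrase, starting at $u_i$, is the longest substring having an occurrence (its source) starting at a position $s_i<u_i$, where the source may overlap the phrase, followed by the next symbol. It is represented as a tuple $(s_i,l_i,\alpha_i)$, and the parse is viewed as a string of tuples. A fixed deterministic parsing rule makes equal strings have equal parses. Protocols are randomized public-coin: the parties share random bits, and the output must be correct with probability at least a fixed constant greater than $1/2$. *)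

theory Defs
  imports "HOL-Probability.Probability"
begin

fun lcp :: "'b list \<Rightarrow> 'b list \<Rightarrow> nat" where
  "lcp (x # xs) (y # ys) = (if x = y then Suc (lcp xs ys) else 0)"
| "lcp _ _ = 0"

text \<open>Length of the phrase (without its trailing symbol) starting at position u:
  the longest length l such that S[u..u+l) has an occurrence starting at some s < u
  (overlap allowed, i.e. l \<le> lcp of the suffixes at s and u) and such that the
  next symbol S[u+l] exists.\<close>
definition lz_len :: "'a list \<Rightarrow> nat \<Rightarrow> nat" where
  "lz_len S u = Max (insert 0 {min (lcp (drop s S) (drop u S)) (length S - u - 1) | s. s < u})"

definition lz_src :: "'a list \<Rightarrow> nat \<Rightarrow> nat" where
  "lz_src S u = (if lz_len S u = 0 then 0
                 else (LEAST s. s < u \<and> lcp (drop s S) (drop u S) \<ge> lz_len S u))"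

function lz_from :: "'a list \<Rightarrow> nat \<Rightarrow> (nat \<times> nat \<times> 'a) list" where
  "lz_from S u = (if length S \<le> u then []
      else (lz_src S u, lz_len S u, S ! (u + lz_len S u)) # lz_from S (u + lz_len S u + 1))"
  by pat_completeness auto
termination by (relation "Wellfounded.measure (\<lambda>(S, u). length S - u)") auto

definition lz77 :: "'a list \<Rightarrow> (nat \<times> nat \<times> 'a) list" where
  "lz77 S = lz_from S 0"

definition coins :: "(nat \<Rightarrow> bool) measure" where
  "coins = (\<Pi>\<^sub>M i\<in>UNIV. measure_pmf (bernoulli_pmf (1/2)))"

text \<open>A protocol: each party's next message depends on its own input, the common
  knowledge k (= LCP of the two parses), the public coins, and the transcript so far.
  Alice speaks in even-numbered rounds, Bob in odd-numbered rounds.  Whether the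
  protocol has stopped is a function of public information only.\<close>
record 'a protocol =
  msgA :: "'a list \<Rightarrow> nat \<Rightarrow> (nat \<Rightarrow> bool) \<Rightarrow> bool list list \<Rightarrow> bool list"
  msgB :: "'a list \<Rightarrow> nat \<Rightarrow> (nat \<Rightarrow> bool) \<Rightarrow> bool list list \<Rightarrow> bool list"
  halt :: "nat \<Rightarrow> (nat \<Rightarrow> bool) \<Rightarrow> bool list list \<Rightarrow> bool"
  outA :: "'a list \<Rightarrow> nat \<Rightarrow> (nat \<Rightarrow> bool) \<Rightarrow> bool list list \<Rightarrow> nat"
  outB :: "'a list \<Rightarrow> nat \<Rightarrow> (nat \<Rightarrow> bool) \<Rightarrow> bool list list \<Rightarrow> nat"

fun transcript :: "'a protocol \<Rightarrow> 'a list \<Rightarrow> 'a list \<Rightarrow> nat \<Rightarrow> (nat \<Rightarrow> bool) \<Rightarrow> nat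
                     \<Rightarrow> bool list list" where
  "transcript P x y k r 0 = []"
| "transcript P x y k r (Suc n) =
     (let t = transcript P x y k r n in
        t @ [if even n then msgA P x k r t else msgB P y k r t])"

definition comm_cost :: "bool list list \<Rightarrow> nat" where
  "comm_cost t = (\<Sum>m\<leftarrow>t. length m + 1)"

definition good_run :: "'a protocol \<Rightarrow> 'a list \<Rightarrow> 'a list \<Rightarrow> nat \<Rightarrow> (nat \<Rightarrow> bool)
                        \<Rightarrow> real \<Rightarrow> real \<Rightarrow> nat \<Rightarrow> bool" where
  "good_run P x y k r R Q v \<longleftrightarrow>
     (\<exists>n. halt P k r (transcript P x y k r n)
        \<and> (\<forall>m<n. \<not> halt P k r (transcript P x y k r m))
        \<and> real n \<le> R
        \<and> real (comm_cost (transcript P x y k r n)) \<le> Q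
        \<and> outA P x k r (transcript P x y k r n) = v
        \<and> outB P y k r (transcript P x y k r n) = v)"

text \<open>Binary logarithm clamped below at 1, used inside O-bounds.\<close>
definition lg :: "real \<Rightarrow> real" where
  "lg x = log 2 (max 2 x)"

end

theory Submission
  imports Defs
begin

text \<open>
  Let p be the start of the phrase that follows the common prefix of the two parses. Both
  parties know p, and A and B agree before p. Every symbol of a phrase is a copy, possibly
  overlapping the phrase itself, of an earlier symbol, so after learning the other party's
  source each party can decode the other phrase from its own prefix and compute how far the two
  phrases agree. The smaller q of the two agreement lengths satisfies
  p + q \<le> LCP(A, B) \<le> p + q + 1, and the last bit is decided by a party that can decode
  the other string's symbol at p + q. The sources are at most LCP(A, B), so it remains to
  transmit q. Either the parties alternately offer their agreement lengths within a bit budget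
  that doubles every round, which takes O(lg lg LCP(A, B)) rounds; or they first exchange the
  levels ceil(lg lg) of their agreement lengths, numbers of O(lg lg lg |A|) bits, which tell
  Alice how far she may truncate her value.
\<close>

section \<open>Longest common prefixes\<close>

lemma le_lcp_iff:
  "n \<le> lcp xs ys \<longleftrightarrow> n \<le> length xs \<and> n \<le> length ys \<and> take n xs = take n ys"
proof (induction xs ys arbitrary: n rule: lcp.induct)
  case (1 x xs y ys)
  then show ?case by (cases n) auto
qed auto

lemma lcp_commute: "lcp xs ys = lcp ys xs"
  by (induction xs ys rule: lcp.induct) auto

lemma less_lcp_iff:
  assumes "n \<le> lcp xs ys"
  shows "n < lcp xs ys \<longleftrightarrow> n < length xs \<and> n < length ys \<and> xs ! n = ys ! n"
proof -
  from assms have "take n xs = take n ys" by (simp add: le_lcp_iff)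
  then show ?thesis
    using le_lcp_iff[of "Suc n" xs ys] by (auto simp: Suc_le_eq take_Suc_conv_app_nth)
qed

lemma lcp_drop_cong:
  assumes "s \<le> p" "p + c \<le> lcp A B"
  shows "c \<le> lcp (drop s A) (drop p A) \<longleftrightarrow> c \<le> lcp (drop s B) (drop p B)"
proof -
  have prefix: "take (p + c) A = take (p + c) B" and len: "p + c \<le> length A" "p + c \<le> length B"
    using assms(2) unfolding le_lcp_iff by auto
  have eq: "take c (drop m A) = take c (drop m B)" if "m \<le> p" for m
  proof -
    have "take (m + c) A = take (m + c) (take (p + c) A)" using that by (simp add: min_def)
    also have "\<dots> = take (m + c) B" using prefix that by (simp add: min_def)
    finally show ?thesis by (simp add: take_drop add.commute)
  qed
  from eq[of s] eq[of p] assms(1) len show ?thesis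
    unfolding le_lcp_iff by (simp only: length_drop) linarith
qed

section \<open>Binary representation of natural numbers\<close>

fun bits_of_nat :: "nat \<Rightarrow> bool list" where
  "bits_of_nat n = (if n = 0 then [] else odd n # bits_of_nat (n div 2))"
declare bits_of_nat.simps [simp del]

fun nat_of_bits :: "bool list \<Rightarrow> nat" where
  "nat_of_bits [] = 0"
| "nat_of_bits (b # bs) = of_bool b + 2 * nat_of_bits bs"

lemma nat_of_bits_of_nat [simp]: "nat_of_bits (bits_of_nat n) = n"
  by (induction n rule: bits_of_nat.induct) (subst bits_of_nat.simps, auto)

lemma less_two_pow_length_bits: "n < 2 ^ length (bits_of_nat n)"
  by (induction n rule: bits_of_nat.induct) (subst bits_of_nat.simps, auto)

lemma two_pow_length_bits_le: "0 < n \<Longrightarrow> 2 ^ (length (bits_of_nat n) - 1) \<le> n"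
proof (induction n rule: bits_of_nat.induct)
  case (1 n)
  show ?case
  proof (cases "n div 2 = 0")
    case True
    with "1.prems" have "n = 1" by auto
    then show ?thesis by (simp add: bits_of_nat.simps)
  next
    case False
    with "1" have "2 ^ (length (bits_of_nat (n div 2)) - 1) \<le> n div 2" by auto
    moreover have "length (bits_of_nat n) = Suc (length (bits_of_nat (n div 2)))"
      using "1.prems" by (subst bits_of_nat.simps) auto
    moreover have "length (bits_of_nat (n div 2)) > 0"
      using False by (subst bits_of_nat.simps) auto
    ultimately show ?thesis by (cases "length (bits_of_nat (n div 2))") auto
  qed
qed

lemma length_bits_le_iff: "length (bits_of_nat n) \<le> w \<longleftrightarrow> n < 2 ^ w"
proof
  assume "length (bits_of_nat n) \<le> w"
  then have "(2::nat) ^ length (bits_of_nat n) \<le> 2 ^ w" by simp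
  then show "n < 2 ^ w" using less_two_pow_length_bits[of n] by linarith
next
  assume n: "n < 2 ^ w"
  show "length (bits_of_nat n) \<le> w"
  proof (rule ccontr)
    assume long: "\<not> length (bits_of_nat n) \<le> w"
    then have "0 < n" by (cases n) (auto simp: bits_of_nat.simps)
    have "w \<le> length (bits_of_nat n) - 1" using long by simp
    then have "(2::nat) ^ w \<le> 2 ^ (length (bits_of_nat n) - 1)"
      by (rule power_increasing) simp
    with two_pow_length_bits_le[OF \<open>0 < n\<close>] n show False by linarith
  qed
qed

lemma length_bits_mono: "m \<le> n \<Longrightarrow> length (bits_of_nat m) \<le> length (bits_of_nat n)"
  using less_two_pow_length_bits[of n] by (intro length_bits_le_iff[THEN iffD2]) linarith

definition bits_level :: "nat \<Rightarrow> nat" where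
  "bits_level n = (LEAST i. length (bits_of_nat n) \<le> 2 ^ i)"

lemma bits_level_le_iff: "bits_level n \<le> i \<longleftrightarrow> length (bits_of_nat n) \<le> 2 ^ i"
proof
  have "length (bits_of_nat n) \<le> 2 ^ bits_level n"
    unfolding bits_level_def by (rule LeastI[of _ "length (bits_of_nat n)"]) (simp add: less_imp_le)
  moreover assume "bits_level n \<le> i"
  then have "(2::nat) ^ bits_level n \<le> 2 ^ i" by simp
  ultimately show "length (bits_of_nat n) \<le> 2 ^ i" by linarith
qed (simp add: bits_level_def Least_le)

lemma bits_level_mono: "m \<le> n \<Longrightarrow> bits_level m \<le> bits_level n"
  using length_bits_mono[of m n] bits_level_le_iff[of n "bits_level n"]
  by (intro bits_level_le_iff[THEN iffD2]) simp

lemma two_pow_bits_level_le: "2 ^ bits_level n \<le> 2 * length (bits_of_nat n) + 1"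
proof (cases "bits_level n")
  case (Suc i)
  then have "2 ^ i < length (bits_of_nat n)" using bits_level_le_iff[of n i] by simp
  then show ?thesis using Suc by simp
qed simp

lemma less_two_pow_two_pow_bits_level: "n < 2 ^ 2 ^ bits_level n"
  using bits_level_le_iff[of n "bits_level n"] by (simp add: length_bits_le_iff)

lemma bits_level_min: "bits_level (min a b) = min (bits_level a) (bits_level b)"
proof (cases "a \<le> b")
  case True
  then show ?thesis using bits_level_mono[OF True] by (simp add: min_def)
next
  case False
  then have "bits_level b \<le> bits_level a" by (intro bits_level_mono) simp
  with False show ?thesis by (auto simp: min_def)
qed

definition doubling_index :: "nat \<Rightarrow> nat \<Rightarrow> nat" where
  "doubling_index a b = (LEAST j. length (bits_of_nat (if even j then a else b)) \<le> 2 ^ j)"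

lemma doubling_index_le: "doubling_index a b \<le> bits_level (min a b) + 1"
proof -
  define i where "i = bits_level (min a b)"
  obtain j where j: "i \<le> j" "j \<le> i + 1" "(if even j then a else b) = min a b"
  proof (cases "a \<le> b")
    case True
    then show ?thesis by (intro that[of "if even i then i else i + 1"]) auto
  next
    case False
    then show ?thesis by (intro that[of "if odd i then i else i + 1"]) auto
  qed
  have "length (bits_of_nat (min a b)) \<le> 2 ^ j"
    using j(1) by (simp add: i_def bits_level_le_iff[symmetric])
  then have "doubling_index a b \<le> j"
    unfolding doubling_index_def using j(3) by (intro Least_le) simp
  with j(2) show ?thesis unfolding i_def by simp
qed

lemma doubling_index_fits:
  "length (bits_of_nat (if even (doubling_index a b) then a else b)) \<le> 2 ^ doubling_index a b"
proof -
  define j where "j = length (bits_of_nat a) + length (bits_of_nat b)"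
  have "length (bits_of_nat (if even j then a else b)) \<le> j" unfolding j_def by simp
  also have "j \<le> 2 ^ j" using less_exp[of j] by simp
  finally show ?thesis unfolding doubling_index_def by (rule LeastI)
qed

lemma doubling_index_least:
  "j < doubling_index a b \<Longrightarrow> 2 ^ j < length (bits_of_nat (if even j then a else b))"
  unfolding doubling_index_def by (drule not_less_Least) simp

section \<open>Logarithmic estimates\<close>

lemma one_le_lg: "1 \<le> lg x"
  unfolding lg_def by simp

lemma lg_mono: "x \<le> y \<Longrightarrow> lg x \<le> lg y"
  unfolding lg_def by (rule log_mono) auto

lemma log2_le_lg: "0 < x \<Longrightarrow> log 2 x \<le> lg x"
  unfolding lg_def by (rule log_mono) auto

lemma le_lg_of_power:
  assumes "2 ^ j \<le> y"
  shows "real j \<le> lg y"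
proof -
  have "real j \<le> log 2 y" using le_log_of_power[of 2 j y] assms by simp
  also have "\<dots> \<le> lg y" using assms by (intro log2_le_lg) (smt (verit) zero_less_power)
  finally show ?thesis .
qed

lemma lg_mult_le:
  assumes "1 \<le> c" "1 \<le> x"
  shows "lg (c * x) \<le> log 2 c + lg x"
proof (cases "c * x \<le> 2")
  case True
  then have "lg (c * x) = 1" unfolding lg_def by (simp add: max_def)
  moreover have "0 \<le> log 2 c" using assms(1) by simp
  ultimately show ?thesis using one_le_lg[of x] by linarith
next
  case False
  then have "lg (c * x) = log 2 c + log 2 x"
    using assms unfolding lg_def by (simp add: max_def log_mult_pos)
  then show ?thesis using log2_le_lg[of x] assms(2) by simp
qed

lemma length_bits_le_lg:
  assumes "m \<le> L"
  shows "real (length (bits_of_nat m)) \<le> 1 + lg (real L)"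
proof -
  have "real (length (bits_of_nat L)) \<le> 1 + lg (real L)"
  proof (cases "L = 0")
    case True
    then show ?thesis using one_le_lg[of 0] by (simp add: bits_of_nat.simps)
  next
    case False
    then have "2 ^ (length (bits_of_nat L) - 1) \<le> L" by (intro two_pow_length_bits_le) simp
    then have "(2::real) ^ (length (bits_of_nat L) - 1) \<le> real L"
      by (metis of_nat_le_iff of_nat_numeral of_nat_power)
    then have "real (length (bits_of_nat L) - 1) \<le> lg (real L)" by (rule le_lg_of_power)
    then show ?thesis by linarith
  qed
  with length_bits_mono[OF assms] show ?thesis by linarith
qed

lemma bits_level_le_lg:
  assumes "v \<le> N"
  shows "real (bits_level v) \<le> 3 + lg (lg (real N))"
proof -
  have "real (2 ^ bits_level v) \<le> real (2 * length (bits_of_nat v) + 1)"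
    using two_pow_bits_level_le of_nat_le_iff by blast
  then have "(2::real) ^ bits_level v \<le> 2 * real (length (bits_of_nat v)) + 1" by simp
  also have "\<dots> \<le> 5 * lg (real N)"
    using length_bits_le_lg[OF assms] one_le_lg[of "real N"] by linarith
  finally have "real (bits_level v) \<le> lg (5 * lg (real N))" by (rule le_lg_of_power)
  also have "\<dots> \<le> log 2 5 + lg (lg (real N))" by (rule lg_mult_le) (simp_all add: one_le_lg)
  also have "log 2 5 \<le> (3::real)" using log_of_power_le[of 5 2 3] by simp
  finally show ?thesis by simp
qed

lemma length_bits_bits_level_le_lg:
  assumes "v \<le> N"
  shows "real (length (bits_of_nat (bits_level v))) \<le> 3 + lg (lg (lg (real N)))"
proof -
  have "real (bits_level v) \<le> 4 * lg (lg (real N))"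
    using bits_level_le_lg[OF assms] one_le_lg[of "lg (real N)"] by linarith
  then have "lg (real (bits_level v)) \<le> lg (4 * lg (lg (real N)))" by (rule lg_mono)
  also have "\<dots> \<le> log 2 4 + lg (lg (lg (real N)))" by (rule lg_mult_le) (simp_all add: one_le_lg)
  also have "log 2 4 \<le> (2::real)" using log_of_power_le[of 4 2 2] by simp
  finally show ?thesis using length_bits_le_lg[of "bits_level v" "bits_level v"] by simp
qed

section \<open>The LZ77 parse\<close>

declare lz_from.simps [simp del]

definition lz_phrase :: "'a list \<Rightarrow> nat \<Rightarrow> nat \<times> nat \<times> 'a" where
  "lz_phrase S u = (lz_src S u, lz_len S u, S ! (u + lz_len S u))"

lemma lz_from_Nil: "length S \<le> u \<Longrightarrow> lz_from S u = []"
  by (subst lz_from.simps) simp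

lemma lz_from_Cons:
  "u < length S \<Longrightarrow> lz_from S u = lz_phrase S u # lz_from S (u + lz_len S u + 1)"
  by (subst lz_from.simps) (simp add: lz_phrase_def)

lemma le_lz_len_iff:
  "m \<le> lz_len S u \<longleftrightarrow>
     m = 0 \<or> m \<le> length S - u - 1 \<and> (\<exists>s<u. m \<le> lcp (drop s S) (drop u S))"
proof -
  have "{min (lcp (drop s S) (drop u S)) (length S - u - 1) | s. s < u}
      = (\<lambda>s. min (lcp (drop s S) (drop u S)) (length S - u - 1)) ` {..<u}"
    by auto
  then show ?thesis unfolding lz_len_def by (auto simp: Max_ge_iff)
qed

lemma lz_len_le: "lz_len S u \<le> length S - u - 1"
  using le_lz_len_iff[of "lz_len S u" S u] by auto

lemma
  assumes "0 < lz_len S u"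
  shows lz_src_less: "lz_src S u < u"
    and lz_len_le_lcp_lz_src: "lz_len S u \<le> lcp (drop (lz_src S u) S) (drop u S)"
proof -
  have "\<exists>s. s < u \<and> lz_len S u \<le> lcp (drop s S) (drop u S)"
    using le_lz_len_iff[of "lz_len S u" S u] assms by auto
  from LeastI_ex[OF this] assms
  show "lz_src S u < u" "lz_len S u \<le> lcp (drop (lz_src S u) S) (drop u S)"
    unfolding lz_src_def by simp_all
qed

lemma lz_src_le: "lz_src S u \<le> u"
  using lz_src_less[of S u] by (cases "lz_len S u = 0") (auto simp: lz_src_def)

lemma lz_phrase_nth:
  assumes "j < lz_len S u"
  shows "S ! (u + j) = S ! (lz_src S u + j)"
proof -
  let ?l = "lz_len S u"
  have "?l \<le> lcp (drop (lz_src S u) S) (drop u S)" using assms by (intro lz_len_le_lcp_lz_src) simp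
  then have "take ?l (drop (lz_src S u) S) = take ?l (drop u S)"
    and "?l \<le> length (drop (lz_src S u) S)" "?l \<le> length (drop u S)"
    unfolding le_lcp_iff by auto
  then have "take ?l (drop (lz_src S u) S) ! j = take ?l (drop u S) ! j"
    by simp
  with assms \<open>?l \<le> length (drop u S)\<close> \<open>?l \<le> length (drop (lz_src S u) S)\<close>
  show ?thesis by simp
qed

text \<open>Symbol j of a copy from source position s < length X appended to X, where the copy may
  overlap itself: once it passes the end of X it continues with its own first symbols.\<close>

function self_copy :: "'a list \<Rightarrow> nat \<Rightarrow> nat \<Rightarrow> 'a" where
  "self_copy X s j = (if length X \<le> s then undefined
     else if s + j < length X then X ! (s + j) else self_copy X s (s + j - length X))"
  by pat_completeness auto
termination by (relation "Wellfounded.measure (\<lambda>(X, s, j). j)") auto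

declare self_copy.simps [simp del]

lemma lz_phrase_self_copy:
  assumes "j < lz_len S u"
  shows "S ! (u + j) = self_copy (take u S) (lz_src S u) j"
  using assms
proof (induction j rule: less_induct)
  case (less j)
  let ?s = "lz_src S u"
  have s: "?s < u" using less.prems by (intro lz_src_less) simp
  have u: "u < length S" using lz_len_le[of S u] less.prems by simp
  have "S ! (u + j) = S ! (?s + j)" using less.prems by (rule lz_phrase_nth)
  show ?case
  proof (cases "?s + j < u")
    case True
    then show ?thesis using \<open>S ! (u + j) = S ! (?s + j)\<close> s u by (subst self_copy.simps) simp
  next
    case False
    define j' where "j' = ?s + j - u"
    have "j' < j" "?s + j = u + j'" using False s unfolding j'_def by auto
    have "self_copy (take u S) ?s j = self_copy (take u S) ?s j'"
      using False s u unfolding j'_def by (subst self_copy.simps) simp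
    also have "\<dots> = S ! (u + j')" using less.IH \<open>j' < j\<close> less.prems by simp
    finally show ?thesis using \<open>S ! (u + j) = S ! (?s + j)\<close> \<open>?s + j = u + j'\<close> by simp
  qed
qed

lemma lz_phrase_le_lcp:
  assumes "u \<le> lcp A B" "u < length A" "u < length B" "lz_phrase A u = lz_phrase B u"
  shows "u + lz_len A u + 1 \<le> lcp A B"
proof -
  let ?l = "lz_len A u"
  have phrase: "lz_len B u = ?l" "lz_src B u = lz_src A u" "A ! (u + ?l) = B ! (u + ?l)"
    using assms(4) unfolding lz_phrase_def by auto
  have prefix: "take u A = take u B" using assms(1) by (simp add: le_lcp_iff)
  have "A ! j = B ! j" if j: "j < u + ?l + 1" for j
  proof -
    consider "j < u" | "u \<le> j" "j < u + ?l" | "j = u + ?l" using j by fastforce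
    then show ?thesis
    proof cases
      case 1
      then show ?thesis using prefix by (metis nth_take)
    next
      case 2
      then obtain i where "j = u + i" "i < ?l" by (metis add_less_cancel_left le_add_diff_inverse)
      then show ?thesis using lz_phrase_self_copy[of i A u] lz_phrase_self_copy[of i B u] prefix phrase
        by simp
    qed (use phrase in simp)
  qed
  moreover have "u + ?l + 1 \<le> length A" "u + ?l + 1 \<le> length B"
    using lz_len_le[of A u] lz_len_le[of B u] assms(2,3) phrase(1) by auto
  ultimately show ?thesis unfolding le_lcp_iff by (auto intro: nth_take_lemma)
qed

primrec phrase_start :: "'a list \<Rightarrow> nat \<Rightarrow> nat" where
  "phrase_start S 0 = 0"
| "phrase_start S (Suc i) = phrase_start S i + lz_len S (phrase_start S i) + 1"

lemma lcp_lz77_phrase_start: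
  assumes "i \<le> lcp (lz77 A) (lz77 B)"
  shows "phrase_start B i = phrase_start A i \<and> phrase_start A i \<le> lcp A B
    \<and> lcp (lz77 A) (lz77 B) = i + lcp (lz_from A (phrase_start A i)) (lz_from B (phrase_start A i))"
  using assms
proof (induction i)
  case 0
  then show ?case by (simp add: lz77_def)
next
  case (Suc i)
  define p where "p = phrase_start A i"
  from Suc have IH: "phrase_start B i = p" "p \<le> lcp A B"
    "lcp (lz77 A) (lz77 B) = i + lcp (lz_from A p) (lz_from B p)"
    by (auto simp: p_def)
  with Suc.prems have pos: "0 < lcp (lz_from A p) (lz_from B p)" by simp
  have "p < length A"
  proof (rule ccontr)
    assume "\<not> p < length A"
    with pos show False by (simp add: lz_from_Nil)
  qed
  have "p < length B"
  proof (rule ccontr)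
    assume "\<not> p < length B"
    with pos show False by (cases "lz_from A p") (simp_all add: lz_from_Nil)
  qed
  with \<open>p < length A\<close> have from_p: "lz_from A p = lz_phrase A p # lz_from A (p + lz_len A p + 1)"
      "lz_from B p = lz_phrase B p # lz_from B (p + lz_len B p + 1)"
    by (simp_all add: lz_from_Cons)
  with pos have phrase: "lz_phrase A p = lz_phrase B p" by (auto split: if_splits)
  then have "lz_len B p = lz_len A p" by (simp add: lz_phrase_def)
  moreover have "p + lz_len A p + 1 \<le> lcp A B"
    using lz_phrase_le_lcp[OF IH(2) \<open>p < length A\<close> \<open>p < length B\<close> phrase] .
  moreover have "lcp (lz_from A p) (lz_from B p)
      = Suc (lcp (lz_from A (p + lz_len A p + 1)) (lz_from B (p + lz_len A p + 1)))"
    using from_p phrase \<open>lz_len B p = lz_len A p\<close> by simp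
  ultimately show ?case using IH by (simp add: p_def)
qed

definition lz_diverge_at :: "'a list \<Rightarrow> 'a list \<Rightarrow> nat \<Rightarrow> bool" where
  "lz_diverge_at A B p \<longleftrightarrow>
     p \<le> lcp A B \<and> (p < length A \<longrightarrow> p < length B \<longrightarrow> lz_phrase A p \<noteq> lz_phrase B p)"

lemma lz_diverge_at_commute: "lz_diverge_at A B p = lz_diverge_at B A p"
  unfolding lz_diverge_at_def by (auto simp: lcp_commute)

lemma lz_diverge_at_phrase_start:
  assumes "k = lcp (lz77 A) (lz77 B)"
  shows "phrase_start B k = phrase_start A k" "lz_diverge_at A B (phrase_start A k)"
proof -
  define p where "p = phrase_start A k"
  have "phrase_start B k = p" "p \<le> lcp A B" "lcp (lz_from A p) (lz_from B p) = 0"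
    using lcp_lz77_phrase_start[of k A B] assms by (auto simp: p_def)
  moreover have "lz_phrase A p \<noteq> lz_phrase B p" if "p < length A" "p < length B"
    using \<open>lcp (lz_from A p) (lz_from B p) = 0\<close> that by (auto simp: lz_from_Cons split: if_splits)
  ultimately show "phrase_start B k = phrase_start A k" "lz_diverge_at A B (phrase_start A k)"
    by (auto simp: lz_diverge_at_def p_def)
qed

lemma lz_len_local:
  assumes "p + lz_len A p + 2 \<le> lcp A B"
  shows "lz_len B p = lz_len A p"
proof -
  let ?l = "lz_len A p"
  have len: "p + ?l + 2 \<le> length A" "p + ?l + 2 \<le> length B"
    using assms by (auto simp: le_lcp_iff)
  have iff: "m \<le> lz_len A p \<longleftrightarrow> m \<le> lz_len B p" if m: "m \<le> ?l + 1" for m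
  proof -
    have "m \<le> lcp (drop s A) (drop p A) \<longleftrightarrow> m \<le> lcp (drop s B) (drop p B)" if "s < p" for s
      using that m assms by (intro lcp_drop_cong) auto
    then have "(\<exists>s<p. m \<le> lcp (drop s A) (drop p A)) \<longleftrightarrow> (\<exists>s<p. m \<le> lcp (drop s B) (drop p B))"
      by blast
    with len m show ?thesis unfolding le_lz_len_iff by auto
  qed
  from iff[of ?l] iff[of "?l + 1"] show ?thesis by simp
qed

lemma lz_src_local:
  assumes "lz_len B p = lz_len A p" "p + lz_len A p \<le> lcp A B"
  shows "lz_src B p = lz_src A p"
proof -
  have "s < p \<and> lz_len A p \<le> lcp (drop s A) (drop p A)
      \<longleftrightarrow> s < p \<and> lz_len A p \<le> lcp (drop s B) (drop p B)" for s
    using lcp_drop_cong[of s p "lz_len A p" A B] assms(2) by auto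
  then show ?thesis unfolding lz_src_def assms(1) by simp
qed

section \<open>The first differing phrases\<close>

definition agree_len :: "'a list \<Rightarrow> nat \<Rightarrow> nat \<Rightarrow> nat" where
  "agree_len S p s = (LEAST j. j = lz_len S p
     \<or> self_copy (take p S) (lz_src S p) j \<noteq> self_copy (take p S) s j)"

lemma agree_len_le: "agree_len S p s \<le> lz_len S p"
  unfolding agree_len_def by (rule Least_le) simp

lemma self_copy_less_agree_len:
  "j < agree_len S p s \<Longrightarrow> self_copy (take p S) (lz_src S p) j = self_copy (take p S) s j"
  unfolding agree_len_def by (drule not_less_Least) simp

lemma agree_len_cases:
  "agree_len S p s = lz_len S p
   \<or> self_copy (take p S) (lz_src S p) (agree_len S p s) \<noteq> self_copy (take p S) s (agree_len S p s)"
  unfolding agree_len_def by (rule LeastI[of _ "lz_len S p"]) simp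

definition copy_matches :: "'a list \<Rightarrow> nat \<Rightarrow> nat \<Rightarrow> nat \<Rightarrow> bool" where
  "copy_matches S p s j \<longleftrightarrow> p + j < length S \<and> S ! (p + j) = self_copy (take p S) s j"

definition phrase_lcp :: "'a list \<Rightarrow> 'a list \<Rightarrow> nat \<Rightarrow> nat" where
  "phrase_lcp A B p = min (agree_len A p (lz_src B p)) (agree_len B p (lz_src A p))"

lemma phrase_lcp_commute: "phrase_lcp A B p = phrase_lcp B A p"
  unfolding phrase_lcp_def by simp

lemma phrase_lcp_le: "phrase_lcp A B p \<le> lz_len A p" "phrase_lcp A B p \<le> lz_len B p"
  using agree_len_le[of A p "lz_src B p"] agree_len_le[of B p "lz_src A p"]
  unfolding phrase_lcp_def by simp_all

lemma phrase_lcp_le_lcp: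
  assumes "p \<le> lcp A B"
  shows "p + phrase_lcp A B p \<le> lcp A B"
proof (cases "phrase_lcp A B p = 0")
  case True
  with assms show ?thesis by simp
next
  case False
  let ?q = "phrase_lcp A B p"
  have prefix: "take p A = take p B" using assms by (simp add: le_lcp_iff)
  have len: "p + ?q \<le> length A" "p + ?q \<le> length B"
    using lz_len_le[of A p] lz_len_le[of B p] phrase_lcp_le[of A B p] False by linarith+
  have "A ! j = B ! j" if j: "j < p + ?q" for j
  proof (cases "j < p")
    case True
    then show ?thesis using prefix by (metis nth_take)
  next
    case False
    then obtain i where i: "j = p + i" "i < ?q"
      using j by (metis add_less_cancel_left le_add_diff_inverse not_less)
    then have "i < agree_len A p (lz_src B p)" "i < lz_len A p" "i < lz_len B p"
      using phrase_lcp_le[of A B p] by (auto simp: phrase_lcp_def)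
    have "A ! (p + i) = self_copy (take p A) (lz_src A p) i"
      by (rule lz_phrase_self_copy) fact
    also have "\<dots> = self_copy (take p A) (lz_src B p) i"
      by (rule self_copy_less_agree_len) fact
    also have "\<dots> = B ! (p + i)"
      using prefix lz_phrase_self_copy[of i B p] \<open>i < lz_len B p\<close> by simp
    finally show ?thesis using i(1) by simp
  qed
  with len show ?thesis unfolding le_lcp_iff by (auto intro: nth_take_lemma)
qed

lemma lcp_le_phrase_lcp_if_lengths:
  assumes "lz_diverge_at A B p" "phrase_lcp A B p = lz_len A p" "phrase_lcp A B p = lz_len B p"
  shows "lcp A B \<le> p + phrase_lcp A B p"
proof (rule ccontr)
  let ?q = "phrase_lcp A B p"
  assume "\<not> lcp A B \<le> p + ?q"
  then have lt: "p + ?q < lcp A B" by simp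
  then have "p + ?q < length A" "p + ?q < length B" "A ! (p + ?q) = B ! (p + ?q)"
    using less_lcp_iff[of "p + ?q" A B] by auto
  moreover have "lz_src B p = lz_src A p"
    using assms(2,3) lt by (intro lz_src_local) auto
  ultimately have "lz_phrase A p = lz_phrase B p"
    using assms(2,3) by (simp add: lz_phrase_def)
  with assms(1) \<open>p + ?q < length A\<close> \<open>p + ?q < length B\<close> show False
    by (simp add: lz_diverge_at_def)
qed

lemma lcp_le_Suc_phrase_lcp:
  assumes "lz_diverge_at A B p"
  shows "lcp A B \<le> p + phrase_lcp A B p + 1"
proof (rule ccontr)
  let ?q = "phrase_lcp A B p"
  assume "\<not> lcp A B \<le> p + ?q + 1"
  then have long: "p + ?q + 2 \<le> lcp A B" by simp
  then have "p \<le> lcp A B" by simp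
  then have prefix: "take p A = take p B" by (simp add: le_lcp_iff)
  have "A ! (p + ?q) = B ! (p + ?q)"
    using long less_lcp_iff[of "p + ?q" A B] by simp
  consider "?q < lz_len A p" "?q < lz_len B p" | "?q = lz_len A p" | "?q = lz_len B p"
    using phrase_lcp_le[of A B p] by linarith
  then show False
  proof cases
    case 1
    have "self_copy (take p A) (lz_src A p) ?q \<noteq> self_copy (take p A) (lz_src B p) ?q"
      using agree_len_cases[of A p "lz_src B p"] agree_len_cases[of B p "lz_src A p"] 1 prefix
      unfolding phrase_lcp_def by (auto simp: min_def split: if_splits)
    moreover have "A ! (p + ?q) = self_copy (take p A) (lz_src A p) ?q"
      using 1 by (intro lz_phrase_self_copy)
    moreover have "B ! (p + ?q) = self_copy (take p A) (lz_src B p) ?q"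
      using 1 prefix lz_phrase_self_copy[of ?q B p] by simp
    ultimately show False using \<open>A ! (p + ?q) = B ! (p + ?q)\<close> by simp
  next
    case 2
    then have "?q = lz_len B p" using long by (simp add: lz_len_local)
    with 2 long show False using lcp_le_phrase_lcp_if_lengths[OF assms] by simp
  next
    case 3
    then have "?q = lz_len A p" using long lz_len_local[of p B A] by (simp add: lcp_commute)
    with 3 long show False using lcp_le_phrase_lcp_if_lengths[OF assms] by simp
  qed
qed

lemma lcp_eq_phrase_lcp:
  assumes "lz_diverge_at A B p"
  shows "lcp A B = p + phrase_lcp A B p + of_bool (p + phrase_lcp A B p < lcp A B)"
  using phrase_lcp_le_lcp[of p A B] lcp_le_Suc_phrase_lcp[OF assms] assms
  by (auto simp: lz_diverge_at_def)

lemma less_lcp_iff_copy_matches: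
  assumes "p \<le> lcp A B" "phrase_lcp A B p < lz_len B p"
  shows "p + phrase_lcp A B p < lcp A B \<longleftrightarrow> copy_matches A p (lz_src B p) (phrase_lcp A B p)"
proof -
  let ?q = "phrase_lcp A B p"
  have "take p A = take p B" using assms(1) by (simp add: le_lcp_iff)
  moreover have "B ! (p + ?q) = self_copy (take p B) (lz_src B p) ?q"
    using assms(2) by (rule lz_phrase_self_copy)
  moreover have "p + ?q < length B" using assms(2) lz_len_le[of B p] by linarith
  ultimately show ?thesis
    using less_lcp_iff[OF phrase_lcp_le_lcp[OF assms(1)]] unfolding copy_matches_def by auto
qed

definition announce_msg :: "'a list \<Rightarrow> nat \<Rightarrow> nat \<Rightarrow> nat \<Rightarrow> bool list" where
  "announce_msg S p s v = (v < lz_len S p) # copy_matches S p s v # bits_of_nat v"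

text \<open>The announcer U sends v together with the bits [v < length of U's phrase] and [U's
  symbol at p + v equals V's copy]. V replies with q = min v (its agreement length) and whether
  the strings agree at p + q. It decides this with its own copy of U's symbol if q lies inside
  U's phrase, and otherwise from U's bit, unless q ends its own phrase too, when they differ.\<close>

definition reply_msg :: "'a list \<Rightarrow> nat \<Rightarrow> nat \<Rightarrow> bool list \<Rightarrow> bool list" where
  "reply_msg S p s m = (let v = nat_of_bits (drop 2 m); q = min v (agree_len S p s) in
     (if q < v \<or> m ! 0 then copy_matches S p s q else q < lz_len S p \<and> m ! 1) # bits_of_nat q)"

lemma reply_announce_msg:
  assumes "lz_diverge_at U V p" "v \<le> lz_len U p"
    and "min v (agree_len V p (lz_src U p)) = phrase_lcp U V p"
  shows "reply_msg V p (lz_src U p) (announce_msg U p (lz_src V p) v)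
    = (p + phrase_lcp U V p < lcp U V) # bits_of_nat (phrase_lcp U V p)"
proof -
  let ?q = "phrase_lcp U V p"
  have p: "p \<le> lcp U V" using assms(1) by (simp add: lz_diverge_at_def)
  have "?q \<le> v" using assms(3) by (metis min.cobounded1)
  have match: "(if ?q < v \<or> v < lz_len U p then copy_matches V p (lz_src U p) ?q
         else ?q < lz_len V p \<and> copy_matches U p (lz_src V p) v) \<longleftrightarrow> p + ?q < lcp U V"
  proof (cases "?q < v \<or> v < lz_len U p")
    case True
    with assms(2) \<open>?q \<le> v\<close> have "?q < lz_len U p" by linarith
    then have "p + ?q < lcp V U \<longleftrightarrow> copy_matches V p (lz_src U p) ?q"
      using less_lcp_iff_copy_matches[of p V U] p by (simp add: lcp_commute phrase_lcp_commute)
    with True show ?thesis by (simp add: lcp_commute)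
  next
    case no_bound: False
    with assms(2) \<open>?q \<le> v\<close> have "?q = v" "?q = lz_len U p" by linarith+
    show ?thesis
    proof (cases "?q < lz_len V p")
      case True
      then show ?thesis using less_lcp_iff_copy_matches[OF p True] no_bound \<open>?q = v\<close> by simp
    next
      case False
      then have "?q = lz_len V p" using phrase_lcp_le[of U V p] by linarith
      then have "lcp U V \<le> p + ?q"
        using lcp_le_phrase_lcp_if_lengths[OF assms(1)] \<open>?q = lz_len U p\<close> by simp
      with no_bound False show ?thesis by simp
    qed
  qed
  moreover have "nat_of_bits (drop 2 (announce_msg U p (lz_src V p) v)) = v"
    "announce_msg U p (lz_src V p) v ! 0 = (v < lz_len U p)"
    "announce_msg U p (lz_src V p) v ! 1 = copy_matches U p (lz_src V p) v"
    by (simp_all add: announce_msg_def)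
  ultimately show ?thesis unfolding reply_msg_def Let_def by (simp only: assms(3))
qed

section \<open>Deterministic protocols\<close>

definition lcp_output :: "'a list \<Rightarrow> nat \<Rightarrow> bool list list \<Rightarrow> nat" where
  "lcp_output S k t = phrase_start S k + nat_of_bits (tl (last t)) + of_bool (hd (last t))"

definition deterministic_protocol ::
  "('a list \<Rightarrow> nat \<Rightarrow> bool list list \<Rightarrow> bool list) \<Rightarrow> (bool list list \<Rightarrow> bool)
    \<Rightarrow> ('a list \<Rightarrow> nat \<Rightarrow> bool list list \<Rightarrow> nat) \<Rightarrow> 'a protocol" where
  "deterministic_protocol msg stop out =
     \<lparr>msgA = \<lambda>S k r. msg S k, msgB = \<lambda>S k r. msg S k, halt = \<lambda>k r. stop,
      outA = \<lambda>S k r. out S k, outB = \<lambda>S k r. out S k\<rparr>"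

lemma transcript_deterministic_protocol:
  assumes "\<And>n. n < length tr \<Longrightarrow> msg (if even n then A else B) k (take n tr) = tr ! n"
  shows "n \<le> length tr \<Longrightarrow> transcript (deterministic_protocol msg stop out) A B k r n = take n tr"
proof (induction n)
  case (Suc n)
  then have "take (Suc n) tr = take n tr @ [tr ! n]" by (simp add: take_Suc_conv_app_nth)
  with Suc assms[of n] show ?case by (cases "even n") (simp_all add: deterministic_protocol_def)
qed simp

lemma good_run_deterministic_protocol:
  assumes msgs: "\<And>n. n < length tr \<Longrightarrow> msg (if even n then A else B) k (take n tr) = tr ! n"
    and "stop tr" "\<And>m. m < length tr \<Longrightarrow> \<not> stop (take m tr)"
    and "out A k tr = v" "out B k tr = v"
    and "real (length tr) \<le> R" "real (comm_cost tr) \<le> Q"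
  shows "good_run (deterministic_protocol msg stop out) A B k r R Q v"
  unfolding good_run_def
  using transcript_deterministic_protocol[where tr = tr and msg = msg and A = A and B = B and k = k,
      OF msgs] assms(2-)
  by (intro exI[of _ "length tr"]) (auto simp: deterministic_protocol_def)

lemma good_run_mono:
  assumes "good_run P A B k r R Q v" "R \<le> R'" "Q \<le> Q'"
  shows "good_run P A B k r R' Q' v"
  using assms(1) unfolding good_run_def by (rule ex_forward) (use assms(2,3) in auto)

definition announced :: "bool list list \<Rightarrow> bool" where
  "announced t \<longleftrightarrow> (\<exists>m \<in> set (drop 2 t). m \<noteq> [False])"

lemma announced_take:
  assumes "m \<noteq> [False]"
  shows "announced (take n ([x, y] @ replicate J [False] @ m # ms)) \<longleftrightarrow> J + 2 < n"
proof
  assume "announced (take n ([x, y] @ replicate J [False] @ m # ms))"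
  then show "J + 2 < n"
    unfolding announced_def by (cases "J + 2 < n") (auto simp: drop_take min_def)
next
  assume "J + 2 < n"
  then obtain d where "n = J + 3 + d" by (intro that[of "n - (J + 3)"]) simp
  then have "m \<in> set (drop 2 (take n ([x, y] @ replicate J [False] @ m # ms)))"
    by (simp add: drop_take)
  with assms show "announced (take n ([x, y] @ replicate J [False] @ m # ms))"
    unfolding announced_def by blast
qed

definition doubling_msg :: "'a list \<Rightarrow> nat \<Rightarrow> bool list list \<Rightarrow> bool list" where
  "doubling_msg S k t = (let n = length t; p = phrase_start S k;
      s = nat_of_bits (t ! (if even n then 1 else 0)); a = agree_len S p s in
     if n < 2 then bits_of_nat (lz_src S p)
     else if announced t then reply_msg S p s (last t)
     else if length (bits_of_nat a) \<le> 2 ^ (n - 2) then announce_msg S p s a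
     else [False])"

definition doubling_protocol :: "'a protocol" where
  "doubling_protocol = deterministic_protocol doubling_msg (\<lambda>t. announced (butlast t)) lcp_output"

definition level_msg :: "'a list \<Rightarrow> nat \<Rightarrow> bool list list \<Rightarrow> bool list" where
  "level_msg S k t = (let n = length t; p = phrase_start S k;
      s = nat_of_bits (t ! (if even n then 1 else 0)); a = agree_len S p s in
     if n < 2 then bits_of_nat (lz_src S p)
     else if n = 2 then bits_of_nat (bits_level a)
     else if n = 3 then bits_of_nat (min (bits_level a) (nat_of_bits (t ! 2)))
     else if n = 4 then announce_msg S p s (min a (2 ^ 2 ^ nat_of_bits (t ! 3) - 1))
     else reply_msg S p s (last t))"

definition level_protocol :: "'a protocol" where
  "level_protocol = deterministic_protocol level_msg (\<lambda>t. length t = 6) lcp_output"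

section \<open>The two protocols on a pair of strings\<close>

locale lz_pair =
  fixes A B :: "'a list"
begin

definition parse_lcp :: nat where
  "parse_lcp = lcp (lz77 A) (lz77 B)"

definition split_pos :: nat where
  "split_pos = phrase_start A parse_lcp"

definition agree_A :: nat where
  "agree_A = agree_len A split_pos (lz_src B split_pos)"

definition agree_B :: nat where
  "agree_B = agree_len B split_pos (lz_src A split_pos)"

definition lcp_reply :: "bool list" where
  "lcp_reply = (split_pos + min agree_A agree_B < lcp A B) # bits_of_nat (min agree_A agree_B)"

lemma phrase_start_parse_lcp:
  "phrase_start A parse_lcp = split_pos" "phrase_start B parse_lcp = split_pos"
  using lz_diverge_at_phrase_start(1)[OF parse_lcp_def] by (simp_all add: split_pos_def)

lemma lz_diverge_at_split_pos: "lz_diverge_at A B split_pos"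
  unfolding split_pos_def by (rule lz_diverge_at_phrase_start(2)[OF parse_lcp_def])

lemma phrase_lcp_split_pos: "phrase_lcp A B split_pos = min agree_A agree_B"
  unfolding phrase_lcp_def agree_A_def agree_B_def ..

lemma lcp_output_lcp_reply:
  assumes "S = A \<or> S = B" "last t = lcp_reply"
  shows "lcp_output S parse_lcp t = lcp A B"
  using assms lcp_eq_phrase_lcp[OF lz_diverge_at_split_pos] phrase_start_parse_lcp
  unfolding lcp_output_def lcp_reply_def phrase_lcp_split_pos by auto

lemma reply_announce_A:
  assumes "v \<le> agree_A" "min v agree_B = min agree_A agree_B"
  shows "reply_msg B split_pos (lz_src A split_pos) (announce_msg A split_pos (lz_src B split_pos) v)
    = lcp_reply"
  using reply_announce_msg[OF lz_diverge_at_split_pos, of v] assms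
    agree_len_le[of A split_pos "lz_src B split_pos"]
  unfolding lcp_reply_def phrase_lcp_split_pos agree_A_def agree_B_def by simp

lemma reply_announce_B:
  assumes "v \<le> agree_B" "min v agree_A = min agree_A agree_B"
  shows "reply_msg A split_pos (lz_src B split_pos) (announce_msg B split_pos (lz_src A split_pos) v)
    = lcp_reply"
  using reply_announce_msg[of B A split_pos v] lz_diverge_at_split_pos assms
    agree_len_le[of B split_pos "lz_src A split_pos"]
  unfolding lcp_reply_def lz_diverge_at_commute[of A] phrase_lcp_commute[of B] lcp_commute[of B]
    phrase_lcp_split_pos agree_A_def agree_B_def
  by (simp add: min.commute)

lemma le_lcp_A_B:
  "lz_src A split_pos \<le> lcp A B" "lz_src B split_pos \<le> lcp A B" "min agree_A agree_B \<le> lcp A B"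
proof -
  have "split_pos + min agree_A agree_B \<le> lcp A B"
    using lz_diverge_at_split_pos unfolding phrase_lcp_split_pos[symmetric]
    by (intro phrase_lcp_le_lcp) (simp add: lz_diverge_at_def)
  then show "lz_src A split_pos \<le> lcp A B" "lz_src B split_pos \<le> lcp A B"
    "min agree_A agree_B \<le> lcp A B"
    using lz_src_le[of A split_pos] lz_src_le[of B split_pos] by linarith+
qed

lemma agree_A_le_length: "agree_A \<le> length A"
  using agree_len_le[of A split_pos "lz_src B split_pos"] lz_len_le[of A split_pos]
  unfolding agree_A_def by linarith

definition doubling_rounds :: nat where
  "doubling_rounds = doubling_index agree_A agree_B"

definition doubling_announcement :: "bool list" where
  "doubling_announcement = (if even doubling_rounds
     then announce_msg A split_pos (lz_src B split_pos) agree_A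
     else announce_msg B split_pos (lz_src A split_pos) agree_B)"

definition doubling_transcript :: "bool list list" where
  "doubling_transcript = [bits_of_nat (lz_src A split_pos), bits_of_nat (lz_src B split_pos)]
     @ replicate doubling_rounds [False] @ [doubling_announcement, lcp_reply]"

lemma announced_take_doubling_transcript:
  "announced (take n doubling_transcript) \<longleftrightarrow> doubling_rounds + 2 < n"
  unfolding doubling_transcript_def
  by (rule announced_take) (simp add: doubling_announcement_def announce_msg_def)

lemma doubling_msg_take_doubling_transcript:
  assumes n: "n < length doubling_transcript"
  defines "X \<equiv> if even n then A else B" and "Y \<equiv> if even n then B else A"
  shows "doubling_msg X parse_lcp (take n doubling_transcript) =
      (if n < 2 then bits_of_nat (lz_src X split_pos)
       else if doubling_rounds + 2 < n
         then reply_msg X split_pos (lz_src Y split_pos) (last (take n doubling_transcript))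
       else if length (bits_of_nat (agree_len X split_pos (lz_src Y split_pos))) \<le> 2 ^ (n - 2)
         then announce_msg X split_pos (lz_src Y split_pos) (agree_len X split_pos (lz_src Y split_pos))
       else [False])"
proof -
  have len: "length (take n doubling_transcript) = n" using n by simp
  have p: "phrase_start X parse_lcp = split_pos" using phrase_start_parse_lcp by (simp add: X_def)
  show ?thesis
  proof (cases "n < 2")
    case True
    then show ?thesis unfolding doubling_msg_def Let_def p len by simp
  next
    case False
    then have "nat_of_bits (take n doubling_transcript ! (if even n then 1 else 0)) = lz_src Y split_pos"
      using n unfolding doubling_transcript_def Y_def by (auto simp: nth_append)
    with False show ?thesis
      unfolding doubling_msg_def Let_def p len announced_take_doubling_transcript by simp
  qed
qed

lemma doubling_transcript_msg:
  assumes n: "n < length doubling_transcript"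
  shows "doubling_msg (if even n then A else B) parse_lcp (take n doubling_transcript)
    = doubling_transcript ! n"
proof -
  define X where "X = (if even n then A else B)"
  define Y where "Y = (if even n then B else A)"
  let ?p = split_pos and ?J = doubling_rounds and ?tr = doubling_transcript
  note msg = doubling_msg_take_doubling_transcript[OF n, folded X_def Y_def]
  have "n < ?J + 4" using n by (simp add: doubling_transcript_def)
  then consider "n = 0" | "n = 1" | "2 \<le> n" "n < ?J + 2" | "n = ?J + 2" | "n = ?J + 3"
    by linarith
  then have "doubling_msg X parse_lcp (take n ?tr) = ?tr ! n"
  proof cases
    case 3
    then have "agree_len X ?p (lz_src Y ?p) = (if even (n - 2) then agree_A else agree_B)"
      unfolding X_def Y_def agree_A_def agree_B_def by auto
    moreover have "2 ^ (n - 2) < length (bits_of_nat (if even (n - 2) then agree_A else agree_B))"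
      using 3 unfolding doubling_rounds_def by (intro doubling_index_least) linarith
    moreover have "?tr ! n = [False]" using 3 unfolding doubling_transcript_def by (auto simp: nth_append)
    ultimately show ?thesis using 3 unfolding msg by simp
  next
    case 4
    then have "agree_len X ?p (lz_src Y ?p) = (if even ?J then agree_A else agree_B)"
      "announce_msg X ?p (lz_src Y ?p) (agree_len X ?p (lz_src Y ?p)) = doubling_announcement"
      unfolding X_def Y_def agree_A_def agree_B_def doubling_announcement_def by auto
    moreover have "?tr ! n = doubling_announcement"
      using 4 unfolding doubling_transcript_def by (simp add: nth_append)
    ultimately show ?thesis
      using 4 doubling_index_fits[of agree_A agree_B] unfolding msg doubling_rounds_def by simp
  next
    case 5
    have "last (take n ?tr) = doubling_announcement" "?tr ! n = lcp_reply"
      using 5 unfolding doubling_transcript_def by (simp_all add: numeral_3_eq_3 take_append nth_append)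
    moreover have "reply_msg X ?p (lz_src Y ?p) doubling_announcement = lcp_reply"
      using 5 reply_announce_A[of agree_A] reply_announce_B[of agree_B]
      unfolding X_def Y_def doubling_announcement_def by (auto simp: min.commute)
    ultimately show ?thesis using 5 unfolding msg by simp
  qed (unfold msg, simp_all add: doubling_transcript_def X_def)
  then show ?thesis unfolding X_def .
qed

lemma doubling_good_run:
  "good_run doubling_protocol A B parse_lcp r
     (length doubling_transcript) (comm_cost doubling_transcript) (lcp A B)"
  unfolding doubling_protocol_def
proof (rule good_run_deterministic_protocol)
  show "announced (butlast doubling_transcript)"
    unfolding butlast_conv_take announced_take_doubling_transcript
    by (simp add: doubling_transcript_def)
  show "\<not> announced (butlast (take m doubling_transcript))" if "m < length doubling_transcript" for m
    using that unfolding butlast_take[OF less_imp_le[OF that]] announced_take_doubling_transcript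
    by (simp add: doubling_transcript_def)
  show "lcp_output A parse_lcp doubling_transcript = lcp A B"
    "lcp_output B parse_lcp doubling_transcript = lcp A B"
    by (simp_all add: lcp_output_lcp_reply doubling_transcript_def)
qed (simp_all add: doubling_transcript_msg)

lemma length_doubling_transcript_le:
  "real (length doubling_transcript) \<le> 8 + lg (lg (real (lcp A B)))"
proof -
  have "doubling_rounds \<le> bits_level (min agree_A agree_B) + 1"
    unfolding doubling_rounds_def by (rule doubling_index_le)
  moreover have "real (bits_level (min agree_A agree_B)) \<le> 3 + lg (lg (real (lcp A B)))"
    using le_lcp_A_B(3) by (rule bits_level_le_lg)
  ultimately show ?thesis by (simp add: doubling_transcript_def)
qed

lemma comm_cost_doubling_transcript_le:
  "real (comm_cost doubling_transcript) \<le> 15 * (1 + lg (real (lcp A B))) + 13"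
proof -
  let ?J = doubling_rounds and ?q = "min agree_A agree_B"
  let ?v = "if even ?J then agree_A else agree_B"
  have "comm_cost doubling_transcript = length (bits_of_nat (lz_src A split_pos))
      + length (bits_of_nat (lz_src B split_pos)) + 2 * ?J + length (bits_of_nat ?v)
      + length (bits_of_nat ?q) + 7"
    by (simp add: comm_cost_def doubling_transcript_def doubling_announcement_def
        announce_msg_def lcp_reply_def sum_list_replicate)
  moreover have "length (bits_of_nat ?v) \<le> 2 ^ ?J"
    unfolding doubling_rounds_def by (rule doubling_index_fits)
  moreover have "?J \<le> 2 ^ ?J" using less_exp[of ?J] by simp
  moreover have "2 ^ ?J \<le> 4 * length (bits_of_nat ?q) + 2"
  proof -
    have "(2::nat) ^ ?J \<le> 2 ^ (bits_level ?q + 1)"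
      unfolding doubling_rounds_def by (rule power_increasing[OF doubling_index_le]) simp
    then show ?thesis using two_pow_bits_level_le[of ?q] by simp
  qed
  ultimately have "comm_cost doubling_transcript \<le> length (bits_of_nat (lz_src A split_pos))
      + length (bits_of_nat (lz_src B split_pos)) + 13 * length (bits_of_nat ?q) + 13"
    by linarith
  then have "real (comm_cost doubling_transcript) \<le> real (length (bits_of_nat (lz_src A split_pos)))
      + real (length (bits_of_nat (lz_src B split_pos))) + 13 * real (length (bits_of_nat ?q)) + 13"
    by (metis (mono_tags) of_nat_add of_nat_le_iff of_nat_mult of_nat_numeral)
  then show ?thesis
    using length_bits_le_lg[OF le_lcp_A_B(1)] length_bits_le_lg[OF le_lcp_A_B(2)]
      length_bits_le_lg[OF le_lcp_A_B(3)]
    by argo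
qed

definition common_level :: nat where
  "common_level = min (bits_level agree_B) (bits_level agree_A)"

definition level_transcript :: "bool list list" where
  "level_transcript = [bits_of_nat (lz_src A split_pos), bits_of_nat (lz_src B split_pos),
     bits_of_nat (bits_level agree_A), bits_of_nat common_level,
     announce_msg A split_pos (lz_src B split_pos) (min agree_A (2 ^ 2 ^ common_level - 1)),
     lcp_reply]"

lemma common_level_eq: "common_level = bits_level (min agree_A agree_B)"
  unfolding common_level_def bits_level_min by (simp add: min.commute)

lemma min_capped_agree_A: "min (min agree_A (2 ^ 2 ^ common_level - 1)) agree_B = min agree_A agree_B"
proof -
  define c :: nat where "c = 2 ^ 2 ^ common_level - 1"
  have "min agree_A agree_B \<le> c"
    using less_two_pow_two_pow_bits_level[of "min agree_A agree_B"] unfolding common_level_eq c_def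
    by linarith
  then have "min (min agree_A c) agree_B = min agree_A agree_B" by (auto simp: min_def)
  then show ?thesis unfolding c_def .
qed

lemma level_transcript_msg:
  assumes "n < length level_transcript"
  shows "level_msg (if even n then A else B) parse_lcp (take n level_transcript) = level_transcript ! n"
proof -
  have "n < 6" using assms by (simp add: level_transcript_def)
  then consider "n = 0" | "n = 1" | "n = 2" | "n = 3" | "n = 4" | "n = 5" by linarith
  then show ?thesis
  proof cases
    case 6
    have "reply_msg B split_pos (lz_src A split_pos)
        (announce_msg A split_pos (lz_src B split_pos) (min agree_A (2 ^ 2 ^ common_level - 1)))
      = lcp_reply"
      by (rule reply_announce_A[OF min.cobounded1 min_capped_agree_A])
    with 6 show ?thesis
      by (simp add: level_msg_def Let_def level_transcript_def phrase_start_parse_lcp)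
  qed (simp_all add: level_msg_def Let_def level_transcript_def phrase_start_parse_lcp
      agree_A_def agree_B_def common_level_def)
qed

lemma level_good_run:
  "good_run level_protocol A B parse_lcp r (length level_transcript) (comm_cost level_transcript) (lcp A B)"
  unfolding level_protocol_def
proof (rule good_run_deterministic_protocol[where tr = level_transcript])
  have "last level_transcript = lcp_reply" by (simp add: level_transcript_def)
  then show "lcp_output A parse_lcp level_transcript = lcp A B"
    "lcp_output B parse_lcp level_transcript = lcp A B"
    by (simp_all add: lcp_output_lcp_reply)
qed (simp_all add: level_transcript_msg, simp_all add: level_transcript_def)

lemma comm_cost_level_transcript_le:
  "real (comm_cost level_transcript)
    \<le> 5 * (1 + lg (real (lcp A B))) + 2 * (3 + lg (lg (lg (real (length A))))) + 10"
proof -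
  let ?q = "min agree_A agree_B" and ?v = "min agree_A (2 ^ 2 ^ common_level - 1)"
  have "comm_cost level_transcript = length (bits_of_nat (lz_src A split_pos))
      + length (bits_of_nat (lz_src B split_pos)) + length (bits_of_nat (bits_level agree_A))
      + length (bits_of_nat common_level) + length (bits_of_nat ?v) + length (bits_of_nat ?q) + 9"
    by (simp add: comm_cost_def level_transcript_def announce_msg_def lcp_reply_def)
  moreover have "length (bits_of_nat common_level) \<le> length (bits_of_nat (bits_level agree_A))"
    by (rule length_bits_mono) (simp add: common_level_def)
  moreover have "length (bits_of_nat ?v) \<le> 2 * length (bits_of_nat ?q) + 1"
  proof -
    have "?v < 2 ^ 2 ^ common_level" by (simp add: min_less_iff_disj)
    then have "length (bits_of_nat ?v) \<le> 2 ^ common_level" by (simp add: length_bits_le_iff)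
    then show ?thesis using two_pow_bits_level_le[of ?q] unfolding common_level_eq by linarith
  qed
  ultimately have "comm_cost level_transcript \<le> length (bits_of_nat (lz_src A split_pos))
      + length (bits_of_nat (lz_src B split_pos)) + 2 * length (bits_of_nat (bits_level agree_A))
      + 3 * length (bits_of_nat ?q) + 10"
    by linarith
  then have "real (comm_cost level_transcript) \<le> real (length (bits_of_nat (lz_src A split_pos)))
      + real (length (bits_of_nat (lz_src B split_pos))) + 2 * real (length (bits_of_nat (bits_level agree_A)))
      + 3 * real (length (bits_of_nat ?q)) + 10"
    by (metis (mono_tags) of_nat_add of_nat_le_iff of_nat_mult of_nat_numeral)
  then show ?thesis
    using length_bits_le_lg[OF le_lcp_A_B(1)] length_bits_le_lg[OF le_lcp_A_B(2)]
      length_bits_le_lg[OF le_lcp_A_B(3)]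
      length_bits_bits_level_le_lg[OF agree_A_le_length]
    by argo
qed

end


lemma doubling_protocol_good_run:
  "good_run doubling_protocol A B (lcp (lz77 A) (lz77 B)) r
     (100 * (1 + lg (lg (real (lcp A B))))) (100 * (1 + lg (real (lcp A B)))) (lcp A B)"
proof (rule good_run_mono[OF lz_pair.doubling_good_run[of A B, unfolded lz_pair.parse_lcp_def]])
  show "real (length (lz_pair.doubling_transcript A B)) \<le> 100 * (1 + lg (lg (real (lcp A B))))"
    using lz_pair.length_doubling_transcript_le[of A B] one_le_lg[of "lg (real (lcp A B))"] by argo
  show "real (comm_cost (lz_pair.doubling_transcript A B)) \<le> 100 * (1 + lg (real (lcp A B)))"
    using lz_pair.comm_cost_doubling_transcript_le[of A B] one_le_lg[of "real (lcp A B)"] by argo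
qed

lemma level_protocol_good_run:
  "good_run level_protocol A B (lcp (lz77 A) (lz77 B)) r
     100 (100 * (1 + lg (real (lcp A B)) + lg (lg (lg (real (length A)))))) (lcp A B)"
proof (rule good_run_mono[OF lz_pair.level_good_run[of A B, unfolded lz_pair.parse_lcp_def]])
  show "real (length (lz_pair.level_transcript A B)) \<le> 100"
    by (simp add: lz_pair.level_transcript_def)
  show "real (comm_cost (lz_pair.level_transcript A B))
      \<le> 100 * (1 + lg (real (lcp A B)) + lg (lg (lg (real (length A)))))"
    using lz_pair.comm_cost_level_transcript_le[of A B] one_le_lg[of "real (lcp A B)"]
      one_le_lg[of "lg (lg (real (length A)))"] by argo
qed

lemma measure_coins_eq_1: "(\<And>r. Q r) \<Longrightarrow> measure coins {r \<in> space coins. Q r} = 1"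
proof -
  assume "\<And>r. Q r"
  then have "{r \<in> space coins. Q r} = space coins" by auto
  moreover have "prob_space coins"
    unfolding coins_def by (rule prob_space_PiM) (rule prob_space_measure_pmf)
  ultimately show ?thesis by (simp add: prob_space.prob_space)
qed

theorem lemma10:
  "(\<exists>(P :: 'a protocol) c C. c > 1/2 \<and>
      (\<forall>A B :: 'a list.
         let k = lcp (lz77 A) (lz77 B); L = lcp A B in
         measure coins {r \<in> space coins.
            good_run P A B k r (C * (1 + lg (lg (real L)))) (C * (1 + lg (real L))) L} \<ge> c))
 \<and> (\<exists>(P :: 'a protocol) c C. c > 1/2 \<and>
      (\<forall>A B :: 'a list.
         let k = lcp (lz77 A) (lz77 B); L = lcp A B in
         measure coins {r \<in> space coins.
            good_run P A B k r C
              (C * (1 + lg (real L) + lg (lg (lg (real (length A)))))) L} \<ge> c))"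
proof -
  have doubling: "measure coins {r \<in> space coins. good_run doubling_protocol A B
      (lcp (lz77 A) (lz77 B)) r (100 * (1 + lg (lg (real (lcp A B)))))
      (100 * (1 + lg (real (lcp A B)))) (lcp A B)} = 1" for A B :: "'a list"
    by (rule measure_coins_eq_1) (rule doubling_protocol_good_run)
  have level: "measure coins {r \<in> space coins. good_run level_protocol A B
      (lcp (lz77 A) (lz77 B)) r 100
      (100 * (1 + lg (real (lcp A B)) + lg (lg (lg (real (length A)))))) (lcp A B)} = 1"
    for A B :: "'a list"
    by (rule measure_coins_eq_1) (rule level_protocol_good_run)
  show ?thesis
    by (rule conjI[OF exI[of _ doubling_protocol] exI[of _ level_protocol]];
        rule exI[of _ 1], rule exI[of _ 100])
      (simp_all only: Let_def doubling level, simp_all)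
qed

end
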